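(* Let $0<\alpha<1$ and $\gamma>0$, and for $j\in\mathbb{Z}_{\ge0}$ let $F_j={}_2F_1(\gamma,j\gamma;1+j\gamma;\alpha)$. Then (1) $F_0=1$; (2) $F_{j+1}>F_j$ for all $j\ge0$; (3) $F_j<(1-\alpha)^{-\gamma}$ for all $j\ge0$.
   Context: ${}_2F_1(a,b;c;z)=\sum_{k\ge0}\frac{(a)_k(b)_k}{k!(c)_k}z^k$ is the Gauss hypergeometric function, $(a)_k$ the Pochhammer symbol. *)

theory Defs
  imports "HOL-Analysis.Analysis"
begin

definition hyp2F1 :: "real \<Rightarrow> real \<Rightarrow> real \<Rightarrow> real \<Rightarrow> real" where
  "hyp2F1 a b c z =
     (\<Sum>k. pochhammer a k * pochhammer b k / (fact k * pochhammer c k) * z ^ k)"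

end

theory Submission
  imports Defs
begin

text \<open>For \<open>c = 1 + b\<close> the \<open>k\<close>-th term of \<open>\<^sub>2F\<^sub>1(a, b; c; z)\<close> is the \<open>k\<close>-th term
  \<open>(a)\<^sub>k z\<^sup>k / k!\<close> of the binomial series of \<open>(1 - z)\<^sup>-\<^sup>a\<close> multiplied by the weight
  \<open>(b)\<^sub>k / (1 + b)\<^sub>k\<close>, which collapses to \<open>b / (b + k)\<close> for \<open>k \<ge> 1\<close>. For
  \<open>a > 0\<close> and \<open>0 < z < 1\<close> all binomial terms are positive, and the weights lie in
  \<open>[0, 1)\<close> and increase strictly with \<open>b \<ge> 0\<close>; so comparing the series termwise
  gives monotonicity in \<open>b\<close> and the bound \<open>(1 - z)\<^sup>-\<^sup>a\<close>, the value of the unweighted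
  series. For \<open>b = 0\<close> only the constant term survives.\<close>

lemma pochhammer_div_pochhammer_1_plus:
  fixes b :: real
  assumes "b > -1" "k > 0"
  shows "pochhammer b k / pochhammer (1 + b) k = b / (b + real k)"
proof -
  have "(b + real k) * pochhammer b k = b * pochhammer (1 + b) k"
    by (metis pochhammer_rec pochhammer_rec' add.commute)
  moreover have "pochhammer (1 + b) k > 0"
    using assms by (intro pochhammer_pos) simp
  moreover have "b + real k > 0"
    using assms by simp
  ultimately show ?thesis
    by (simp add: field_simps)
qed

lemma pochhammer_div_pochhammer_1_plus_le_1:
  fixes b :: real
  assumes "b \<ge> 0"
  shows "pochhammer b k / pochhammer (1 + b) k \<le> 1"
  using assms pochhammer_div_pochhammer_1_plus[of b k] by (cases "k = 0") simp_all

lemma pochhammer_div_pochhammer_1_plus_less_1: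
  fixes b :: real
  assumes "b \<ge> 0" "k > 0"
  shows "pochhammer b k / pochhammer (1 + b) k < 1"
  using assms pochhammer_div_pochhammer_1_plus[of b k] by simp

lemma pochhammer_div_pochhammer_1_plus_nonneg:
  fixes b :: real
  assumes "b \<ge> 0"
  shows "pochhammer b k / pochhammer (1 + b) k \<ge> 0"
  using assms pochhammer_div_pochhammer_1_plus[of b k] by (cases "k = 0") simp_all

lemma pochhammer_div_pochhammer_1_plus_mono:
  fixes b b' :: real
  assumes "0 \<le> b" "b \<le> b'"
  shows "pochhammer b k / pochhammer (1 + b) k \<le> pochhammer b' k / pochhammer (1 + b') k"
proof (cases "k = 0")
  case False
  have "b / (b + real k) \<le> b' / (b' + real k)"
    using assms False by (simp add: field_simps mult_right_mono)
  with False assms show ?thesis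
    by (simp add: pochhammer_div_pochhammer_1_plus)
qed simp

lemma pochhammer_div_pochhammer_1_plus_strict_mono:
  fixes b b' :: real
  assumes "0 \<le> b" "b < b'" "k > 0"
  shows "pochhammer b k / pochhammer (1 + b) k < pochhammer b' k / pochhammer (1 + b') k"
proof -
  have "b / (b + real k) < b' / (b' + real k)"
    using assms by (simp add: field_simps)
  with assms show ?thesis
    by (simp add: pochhammer_div_pochhammer_1_plus)
qed

lemma sums_pochhammer_powr:
  fixes a z :: real
  assumes "\<bar>z\<bar> < 1"
  shows "(\<lambda>k. pochhammer a k / fact k * z ^ k) sums (1 - z) powr (- a)"
proof -
  have "(- a gchoose k) * (- z) ^ k = pochhammer a k / fact k * z ^ k" for k
  proof -
    have "(- a gchoose k) * (- z) ^ k = ((- 1) ^ k * (- 1) ^ k) * (pochhammer a k / fact k * z ^ k)"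
      by (simp add: gbinomial_pochhammer power_minus[of z])
    also have "(- 1 :: real) ^ k * (- 1) ^ k = 1"
      by (simp flip: power_add)
    finally show ?thesis
      by simp
  qed
  then show ?thesis
    using gen_binomial_real[of "- z" "- a"] assms by simp
qed

lemma hyp2F1_eq_suminf_weighted:
  "hyp2F1 a b c z = (\<Sum>k. pochhammer a k / fact k * z ^ k * (pochhammer b k / pochhammer c k))"
  unfolding hyp2F1_def by (simp add: field_simps)

lemma hyp2F1_b_0: "hyp2F1 a 0 c z = 1"
proof -
  have "(\<lambda>k. pochhammer a k / fact k * z ^ k * (pochhammer 0 k / pochhammer c k))
          = (\<lambda>k. if k = 0 then 1 else 0)"
    by (auto simp: pochhammer_0_left)
  moreover have "(\<lambda>k. if k = 0 then 1 else 0 :: real) sums 1"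
    using sums_single[of 0 "\<lambda>_. 1 :: real"] by simp
  ultimately show ?thesis
    by (simp add: hyp2F1_eq_suminf_weighted sums_iff)
qed

lemma suminf_weighted_strict_mono:
  fixes c u v :: "nat \<Rightarrow> real"
  assumes "summable c" "\<And>k. 0 \<le> c k"
    and "\<And>k. 0 \<le> u k" "\<And>k. u k \<le> v k" "\<And>k. v k \<le> 1"
    and "0 < c i" "u i < v i"
  shows "(\<Sum>k. c k * u k) < (\<Sum>k. c k * v k)"
proof -
  have summable_weighted: "summable (\<lambda>k. c k * w k)" if "\<And>k. 0 \<le> w k" "\<And>k. w k \<le> 1" for w
    using that assms(2)
    by (intro summable_comparison_test[OF _ assms(1)]) (auto intro!: mult_left_le)
  have summable_u: "summable (\<lambda>k. c k * u k)"
    using assms(3) order_trans[OF assms(4,5)] by (rule summable_weighted)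
  have summable_v: "summable (\<lambda>k. c k * v k)"
    using order_trans[OF assms(3,4)] assms(5) by (rule summable_weighted)
  have "0 < (\<Sum>k. c k * v k - c k * u k)"
    using assms summable_u summable_v
    by (intro suminf_pos2[where i = i] summable_diff)
       (auto simp flip: right_diff_distrib)
  also have "\<dots> = (\<Sum>k. c k * v k) - (\<Sum>k. c k * u k)"
    using summable_u summable_v by (simp add: suminf_diff)
  finally show ?thesis
    by simp
qed

lemma binomial_term_pos:
  fixes a z :: real
  assumes "0 < a" "0 < z"
  shows "0 < pochhammer a k / fact k * z ^ k"
  using assms by (simp add: pochhammer_pos)

lemma hyp2F1_1_plus_strict_mono:
  fixes a b b' z :: real
  assumes "0 < a" "0 < z" "z < 1" "0 \<le> b" "b < b'"
  shows "hyp2F1 a b (1 + b) z < hyp2F1 a b' (1 + b') z"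
  unfolding hyp2F1_eq_suminf_weighted
proof (rule suminf_weighted_strict_mono[where i = 1])
  show "summable (\<lambda>k. pochhammer a k / fact k * z ^ k)"
    using assms sums_pochhammer_powr[of z a] by (simp add: sums_summable)
  show "0 \<le> pochhammer a k / fact k * z ^ k" for k
    using assms binomial_term_pos less_imp_le by blast
  show "0 < pochhammer a 1 / fact 1 * z ^ 1"
    by (rule binomial_term_pos[OF assms(1,2)])
  show "0 \<le> pochhammer b k / pochhammer (1 + b) k" for k
    using assms by (intro pochhammer_div_pochhammer_1_plus_nonneg) simp
  show "pochhammer b k / pochhammer (1 + b) k \<le> pochhammer b' k / pochhammer (1 + b') k" for k
    using assms by (intro pochhammer_div_pochhammer_1_plus_mono) simp_all
  show "pochhammer b' k / pochhammer (1 + b') k \<le> 1" for k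
    using assms by (intro pochhammer_div_pochhammer_1_plus_le_1) simp
  show "pochhammer b 1 / pochhammer (1 + b) 1 < pochhammer b' 1 / pochhammer (1 + b') 1"
    using assms by (intro pochhammer_div_pochhammer_1_plus_strict_mono) simp_all
qed

lemma hyp2F1_1_plus_less_powr:
  fixes a b z :: real
  assumes "0 < a" "0 < z" "z < 1" "0 \<le> b"
  shows "hyp2F1 a b (1 + b) z < (1 - z) powr (- a)"
proof -
  have binomial_sums: "(\<lambda>k. pochhammer a k / fact k * z ^ k) sums (1 - z) powr (- a)"
    using assms by (intro sums_pochhammer_powr) simp
  have "hyp2F1 a b (1 + b) z < (\<Sum>k. pochhammer a k / fact k * z ^ k * 1)"
    unfolding hyp2F1_eq_suminf_weighted
  proof (rule suminf_weighted_strict_mono[where i = 1])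
    show "summable (\<lambda>k. pochhammer a k / fact k * z ^ k)"
      using binomial_sums by (rule sums_summable)
    show "0 \<le> pochhammer a k / fact k * z ^ k" for k
      using assms binomial_term_pos less_imp_le by blast
    show "0 < pochhammer a 1 / fact 1 * z ^ 1"
      by (rule binomial_term_pos[OF assms(1,2)])
    show "0 \<le> pochhammer b k / pochhammer (1 + b) k" for k
      using assms by (intro pochhammer_div_pochhammer_1_plus_nonneg)
    show "pochhammer b k / pochhammer (1 + b) k \<le> 1" for k
      using assms by (intro pochhammer_div_pochhammer_1_plus_le_1)
    show "pochhammer b 1 / pochhammer (1 + b) 1 < 1"
      using assms by (intro pochhammer_div_pochhammer_1_plus_less_1) simp_all
  qed simp
  also have "\<dots> = (1 - z) powr (- a)"
    using binomial_sums by (simp add: sums_iff)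
  finally show ?thesis .
qed

theorem mainTheorem5:
  fixes \<alpha> \<gamma> :: real and F :: "nat \<Rightarrow> real"
  assumes "0 < \<alpha>" and "\<alpha> < 1" and "0 < \<gamma>"
    and "\<And>j. F j = hyp2F1 \<gamma> (real j * \<gamma>) (1 + real j * \<gamma>) \<alpha>"
  shows "F 0 = 1 \<and> (\<forall>j. F (Suc j) > F j) \<and> (\<forall>j. F j < (1 - \<alpha>) powr (- \<gamma>))"
proof (intro conjI allI)
  show "F 0 = 1"
    using assms(4)[of 0] by (simp add: hyp2F1_b_0)
  show "F j < F (Suc j)" for j
    using assms by (simp add: hyp2F1_1_plus_strict_mono distrib_right)
  show "F j < (1 - \<alpha>) powr (- \<gamma>)" for j
    using assms by (simp add: hyp2F1_1_plus_less_powr)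
qed

end
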